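(* Let $T$ be a finite tree and let $L$ be the set of pendant edges of $T$. Then $\mathrm{gp_e}(T) = |L|$.
   Context: A pendant vertex is a vertex of degree one; a pendant edge is an edge incident to a pendant vertex. A set $S$ of edges of a graph $G$ is an edge general position set if no geodesic (shortest path) of $G$ contains three edges of $S$; $\mathrm{gp_e}(G)$ is the maximum cardinality of an edge general position set of $G$. *)

theory Defs
  imports Main
begin

definition simple_graph :: "'a set \<Rightarrow> 'a set set \<Rightarrow> bool" where
  "simple_graph V E \<longleftrightarrow> finite V \<and>
     (\<forall>e\<in>E. \<exists>u v. e = {u, v} \<and> u \<noteq> v \<and> u \<in> V \<and> v \<in> V)"

fun walk_edges :: "'a list \<Rightarrow> 'a set list" where
  "walk_edges (u # v # vs) = {u, v} # walk_edges (v # vs)"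
| "walk_edges _ = []"

definition is_path :: "'a set \<Rightarrow> 'a set set \<Rightarrow> 'a list \<Rightarrow> bool" where
  "is_path V E p \<longleftrightarrow> p \<noteq> [] \<and> set p \<subseteq> V \<and> distinct p \<and> set (walk_edges p) \<subseteq> E"

definition connected_graph :: "'a set \<Rightarrow> 'a set set \<Rightarrow> bool" where
  "connected_graph V E \<longleftrightarrow>
     (\<forall>u\<in>V. \<forall>v\<in>V. \<exists>p. is_path V E p \<and> hd p = u \<and> last p = v)"

definition is_cycle :: "'a set \<Rightarrow> 'a set set \<Rightarrow> 'a list \<Rightarrow> bool" where
  "is_cycle V E c \<longleftrightarrow> length c \<ge> 3 \<and> is_path V E c \<and> {last c, hd c} \<in> E"

definition is_tree :: "'a set \<Rightarrow> 'a set set \<Rightarrow> bool" where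
  "is_tree V E \<longleftrightarrow> simple_graph V E \<and> V \<noteq> {} \<and> connected_graph V E \<and>
     \<not> (\<exists>c. is_cycle V E c)"

definition is_geodesic :: "'a set \<Rightarrow> 'a set set \<Rightarrow> 'a list \<Rightarrow> bool" where
  "is_geodesic V E p \<longleftrightarrow> is_path V E p \<and>
     (\<forall>q. is_path V E q \<and> hd q = hd p \<and> last q = last p \<longrightarrow> length p \<le> length q)"

definition degree :: "'a set set \<Rightarrow> 'a \<Rightarrow> nat" where
  "degree E v = card {e \<in> E. v \<in> e}"

definition pendant_edges :: "'a set \<Rightarrow> 'a set set \<Rightarrow> 'a set set" where
  "pendant_edges V E = {e \<in> E. \<exists>v\<in>e. v \<in> V \<and> degree E v = 1}"

definition edge_gp_set :: "'a set \<Rightarrow> 'a set set \<Rightarrow> 'a set set \<Rightarrow> bool" where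
  "edge_gp_set V E S \<longleftrightarrow> S \<subseteq> E \<and>
     (\<forall>p. is_geodesic V E p \<longrightarrow> card (set (walk_edges p) \<inter> S) \<le> 2)"

definition gp_e :: "'a set \<Rightarrow> 'a set set \<Rightarrow> nat" where
  "gp_e V E = Max {card S | S. edge_gp_set V E S}"

end

(*
  In a tree the path between two vertices is unique, so every path is a geodesic and a set of
  edges is in edge general position iff no path contains three of its edges. Interior vertices
  of a path have degree at least two, so a path can use pendant edges only as its first and
  last edge: the pendant edges are in general position.

  For the upper bound remove a leaf l with pendant edge lw and induct on the number of vertices.
  Deleting lw from a general position set S leaves one of T - l, and T - l has fewer pendant
  edges than T unless w has degree two. In that case w becomes a leaf of T - l with new pendant
  edge g. If g is not in S, trading lw for g keeps S in general position, since a path of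
  T - l through g ends at w and extends by lw in T. If g is in S, every path from l through
  a third edge of S would start with lw and g, so S = {lw, g}, and T has at least two pendant
  edges.
*)
theory Submission
  imports Defs
begin

section \<open>Walks and paths\<close>

lemma walk_edges_conv_zip: "walk_edges p = map (\<lambda>(x, y). {x, y}) (zip p (tl p))"
  by (induction p rule: walk_edges.induct) auto

lemma set_walk_edges: "set (walk_edges p) = {{p!i, p!Suc i} | i. Suc i < length p}"
  by (force simp: walk_edges_conv_zip set_zip nth_tl)

lemma walk_edges_append:
  "walk_edges (xs @ ys) =
     walk_edges xs @ (if xs \<noteq> [] \<and> ys \<noteq> [] then [{last xs, hd ys}] else []) @ walk_edges ys"
  by (induction xs rule: walk_edges.induct) (cases ys; auto)+

lemma set_walk_edges_rev: "set (walk_edges (rev p)) = set (walk_edges p)"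
proof (induction p)
  case (Cons a p)
  then show ?case
    by (cases p) (auto simp: walk_edges_append insert_commute)
qed simp

lemma walk_edges_subset: "e \<in> set (walk_edges p) \<Longrightarrow> e \<subseteq> set p"
  by (auto simp: set_walk_edges)

lemma is_path_rev: "is_path V E p \<Longrightarrow> is_path V E (rev p)"
  by (auto simp: is_path_def set_walk_edges_rev)

lemma is_path_appendD1: "is_path V E (xs @ ys) \<Longrightarrow> xs \<noteq> [] \<Longrightarrow> is_path V E xs"
  by (auto simp: is_path_def walk_edges_append)

lemma is_path_appendD2: "is_path V E (xs @ ys) \<Longrightarrow> ys \<noteq> [] \<Longrightarrow> is_path V E ys"
  by (auto simp: is_path_def walk_edges_append)

lemma is_path_drop: "is_path V E p \<Longrightarrow> i < length p \<Longrightarrow> is_path V E (drop i p)"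
  using is_path_appendD2[of V E "take i p" "drop i p"] by simp

lemma is_path_snoc:
  "is_path V E p \<Longrightarrow> y \<in> V \<Longrightarrow> y \<notin> set p \<Longrightarrow> {last p, y} \<in> E \<Longrightarrow> is_path V E (p @ [y])"
  by (auto simp: is_path_def walk_edges_append)

lemma is_path_mono: "is_path V E p \<Longrightarrow> V \<subseteq> V' \<Longrightarrow> E \<subseteq> E' \<Longrightarrow> is_path V' E' p"
  by (auto simp: is_path_def)

lemma is_path_edge_nth: "is_path V E p \<Longrightarrow> Suc i < length p \<Longrightarrow> {p!i, p!Suc i} \<in> E"
  unfolding is_path_def set_walk_edges by blast

lemma distinct_hd_eq_last_iff: "distinct p \<Longrightarrow> p \<noteq> [] \<Longrightarrow> hd p = last p \<longleftrightarrow> length p = 1"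
  by (cases p) auto

section \<open>Paths in trees\<close>

lemma internally_disjoint_paths_cycle:
  assumes p: "is_path V E (u # pm @ [t])" and q: "is_path V E (u # qm @ [t])"
    and disj: "set pm \<inter> set qm = {}" and nontrivial: "pm \<noteq> [] \<or> qm \<noteq> []"
  shows "is_cycle V E (u # pm @ t # rev qm)"
proof -
  let ?c = "u # pm @ t # rev qm"
  have "set (walk_edges (t # rev qm @ [u])) \<subseteq> E"
    using q set_walk_edges_rev[of "u # qm @ [t]"] by (simp add: is_path_def)
  moreover have "set (walk_edges ((u # pm) @ [t])) \<subseteq> E"
    using p by (simp add: is_path_def)
  moreover have "?c @ [u] = (u # pm) @ (t # rev qm @ [u])"
    by simp
  ultimately have "set (walk_edges (?c @ [u])) \<subseteq> E"
    by (simp only: walk_edges_append) auto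
  then have "set (walk_edges ?c) \<subseteq> E" and "{last ?c, hd ?c} \<in> E"
    unfolding walk_edges_append[of ?c "[u]"] by (auto simp: insert_commute)
  moreover have "distinct ?c" and "set ?c \<subseteq> V"
    using p q disj by (auto simp: is_path_def)
  moreover have "length ?c \<ge> 3"
    using nontrivial by (auto simp: Suc_le_eq)
  ultimately show ?thesis
    by (simp add: is_cycle_def is_path_def)
qed

lemma acyclic_internally_disjoint_paths_eq:
  assumes acyclic: "\<nexists>c. is_cycle V E c"
    and paths: "is_path V E p" "is_path V E q" "hd p = hd q" "last p = last q"
    and disjoint: "\<forall>z \<in> set p \<inter> set q. z = hd p \<or> z = last p"
  shows "p = q"
proof -
  have "p \<noteq> []" "q \<noteq> []" "distinct p" "distinct q"
    using paths by (auto simp: is_path_def)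
  show ?thesis
  proof (cases "length p \<le> 1 \<or> length q \<le> 1")
    case True
    then have "length p = 1 \<or> length q = 1"
      using \<open>p \<noteq> []\<close> \<open>q \<noteq> []\<close> by (simp add: le_Suc_eq)
    then have "length p = 1" "length q = 1"
      using distinct_hd_eq_last_iff \<open>p \<noteq> []\<close> \<open>q \<noteq> []\<close> \<open>distinct p\<close> \<open>distinct q\<close> paths(3,4)
      by metis+
    then show ?thesis
      using paths(3) by (auto simp: length_Suc_conv)
  next
    case False
    obtain u pm t where p: "p = u # pm @ [t]"
      using False by (cases p; cases "tl p" rule: rev_cases) auto
    moreover obtain u' qm t' where "q = u' # qm @ [t']"
      using False by (cases q; cases "tl q" rule: rev_cases) auto
    ultimately have q: "q = u # qm @ [t]"
      using paths(3,4) by simp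
    have "set pm \<inter> set qm = {}"
      using disjoint \<open>distinct p\<close> p q by auto
    then show ?thesis
      using internally_disjoint_paths_cycle[of V E u pm t qm] acyclic paths p q by fastforce
  qed
qed

lemma acyclic_path_unique:
  assumes acyclic: "\<nexists>c. is_cycle V E c"
    and "is_path V E p" "is_path V E q" "hd p = hd q" "last p = last q"
  shows "p = q"
  using assms(2-)
proof (induction "length p + length q" arbitrary: p q rule: less_induct)
  case less
  show ?case
  proof (cases "\<exists>z \<in> set p \<inter> set q. z \<noteq> hd p \<and> z \<noteq> last p")
    case True
    then obtain z p1 p2 q1 q2 where z: "z \<noteq> hd p" "z \<noteq> last p"
      and p: "p = p1 @ z # p2" and q: "q = q1 @ z # q2"
      by (metis IntE split_list)
    have nonempty: "p1 \<noteq> []" "q1 \<noteq> []" "p2 \<noteq> []" "q2 \<noteq> []"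
      using z less.prems(3,4) p q by auto
    have "p1 @ [z] = q1 @ [z]"
    proof (rule less.hyps)
      show "is_path V E (p1 @ [z])" "is_path V E (q1 @ [z])"
        using less.prems(1,2) p q is_path_appendD1[of V E "_ @ [z]"] by auto
    qed (use p q nonempty less.prems(3) in auto)
    moreover have "z # p2 = z # q2"
    proof (rule less.hyps)
      show "is_path V E (z # p2)" "is_path V E (z # q2)"
        using less.prems(1,2) p q is_path_appendD2[of V E _ "z # _"] by auto
    qed (use p q nonempty less.prems(4) in auto)
    ultimately show ?thesis
      using p q by simp
  next
    case False
    then show ?thesis
      using acyclic_internally_disjoint_paths_eq[OF acyclic less.prems] by blast
  qed
qed

lemma tree_path_is_geodesic:
  assumes "is_tree V E" "is_path V E p"
  shows "is_geodesic V E p"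
proof -
  have "q = p" if "is_path V E q" "hd q = hd p" "last q = last p" for q
    using acyclic_path_unique[of V E q p] assms that by (simp add: is_tree_def)
  then show ?thesis
    using assms(2) by (auto simp: is_geodesic_def)
qed

lemma tree_edge_gp_set_iff:
  assumes "is_tree V E"
  shows "edge_gp_set V E S \<longleftrightarrow>
    S \<subseteq> E \<and> (\<forall>p. is_path V E p \<longrightarrow> card (set (walk_edges p) \<inter> S) \<le> 2)"
proof -
  have "is_geodesic V E p \<longleftrightarrow> is_path V E p" for p
    using tree_path_is_geodesic[OF assms] by (auto simp: is_geodesic_def)
  then show ?thesis
    by (simp add: edge_gp_set_def)
qed

lemma simple_graph_finite_edges:
  assumes "simple_graph V E"
  shows "finite E"
proof -
  have "E \<subseteq> Pow V" "finite V"
    using assms by (auto simp: simple_graph_def)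
  then show ?thesis
    using finite_subset[of E "Pow V"] by simp
qed

lemma degree_eq_1_iff:
  "degree E v = 1 \<longleftrightarrow> (\<exists>f\<in>E. v \<in> f \<and> (\<forall>e\<in>E. v \<in> e \<longrightarrow> e = f))"
proof
  assume "degree E v = 1"
  then obtain f where "{e \<in> E. v \<in> e} = {f}"
    unfolding degree_def by (rule card_1_singletonE)
  then show "\<exists>f\<in>E. v \<in> f \<and> (\<forall>e\<in>E. v \<in> e \<longrightarrow> e = f)"
    by blast
next
  assume "\<exists>f\<in>E. v \<in> f \<and> (\<forall>e\<in>E. v \<in> e \<longrightarrow> e = f)"
  then obtain f where "{e \<in> E. v \<in> e} = {f}"
    by blast
  then show "degree E v = 1"
    by (simp add: degree_def)
qed

lemma degree_1_edge_unique:
  assumes "degree E v = 1" "f \<in> E" "v \<in> f" "e \<in> E" "v \<in> e"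
  shows "e = f"
proof -
  obtain g where "\<forall>e\<in>E. v \<in> e \<longrightarrow> e = g"
    using assms(1) unfolding degree_eq_1_iff by auto
  then show ?thesis
    using assms(2-) by blast
qed

lemma path_interior_degree:
  assumes "is_path V E p" "0 < i" "Suc i < length p"
  shows "degree E (p!i) \<noteq> 1"
proof
  assume "degree E (p!i) = 1"
  moreover have "{p!(i-1), p!i} \<in> E" "{p!i, p!Suc i} \<in> E"
    using is_path_edge_nth[OF assms(1), of "i-1"] is_path_edge_nth[OF assms(1), of i] assms(2,3)
    by simp_all
  ultimately have "{p!(i-1), p!i} = {p!i, p!Suc i}"
    using degree_1_edge_unique[of E "p!i"] by simp
  moreover have "p!(i-1) \<noteq> p!Suc i" "p!(i-1) \<noteq> p!i"
    using assms by (auto simp: is_path_def nth_eq_iff_index_eq)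
  ultimately show False
    by (simp add: doubleton_eq_iff)
qed

lemma path_avoids_leaf:
  assumes "is_path V E p" "degree E l = 1" "hd p \<noteq> l" "last p \<noteq> l"
  shows "l \<notin> set p"
proof
  assume "l \<in> set p"
  then obtain i where i: "i < length p" "p!i = l"
    by (meson in_set_conv_nth)
  moreover have "p \<noteq> []"
    using i by auto
  then have "i \<noteq> 0" "i \<noteq> length p - 1"
    using assms(3,4) i by (metis hd_conv_nth, metis last_conv_nth)
  ultimately have "0 < i" "Suc i < length p"
    by auto
  then show False
    using path_interior_degree[OF assms(1)] i assms(2) by blast
qed

lemma path_length_le_card: "is_path V E p \<Longrightarrow> finite V \<Longrightarrow> length p \<le> card V"
  unfolding is_path_def by (metis card_mono distinct_card)

lemma ex_longest_path_from:
  assumes "finite V" "is_path V E p0"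
  obtains p where "is_path V E p" "hd p = hd p0"
    "\<And>q. is_path V E q \<Longrightarrow> hd q = hd p0 \<Longrightarrow> length q \<le> length p"
proof -
  have "\<forall>q. is_path V E q \<and> hd q = hd p0 \<longrightarrow> length q < Suc (card V)"
    using assms(1) by (auto simp: less_Suc_eq_le intro: path_length_le_card)
  then obtain p where "is_path V E p \<and> hd p = hd p0"
    "\<forall>q. is_path V E q \<and> hd q = hd p0 \<longrightarrow> length q \<le> length p"
    using Lattices_Big.ex_has_greatest_nat[of "\<lambda>q. is_path V E q \<and> hd q = hd p0" p0 length
        "Suc (card V)"] assms(2) by blast
  then show thesis
    using that by blast
qed

lemma simple_graph_edge_other:
  assumes "simple_graph V E" "e \<in> E" "x \<in> e"
  obtains y where "e = {x, y}" "y \<noteq> x" "y \<in> V"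
proof -
  obtain a b where ab: "e = {a, b}" "a \<noteq> b" "a \<in> V" "b \<in> V"
    using assms(1,2) unfolding simple_graph_def by blast
  then consider "x = a" | "x = b"
    using assms(3) by blast
  then show thesis
  proof cases
    case 1
    then show thesis using that[of b] ab by simp
  next
    case 2
    then show thesis using that[of a] ab by (simp add: insert_commute)
  qed
qed

lemma longest_path_neighbour_in_path:
  assumes p: "is_path V E p" "p \<noteq> []" and y: "{last p, y} \<in> E" "y \<in> V"
    and longest: "\<And>q. is_path V E q \<Longrightarrow> hd q = hd p \<Longrightarrow> length q \<le> length p"
  shows "y \<in> set p"
proof (rule ccontr)
  assume "y \<notin> set p"
  then have "is_path V E (p @ [y])"
    using is_path_snoc[OF p(1) y(2) _ y(1)] by simp
  moreover have "hd (p @ [y]) = hd p"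
    using p(2) by simp
  ultimately show False
    using longest[of "p @ [y]"] by simp
qed

lemma longest_path_last_leaf:
  assumes tree: "is_tree V E" and p: "is_path V E p" "2 \<le> length p"
    and longest: "\<And>q. is_path V E q \<Longrightarrow> hd q = hd p \<Longrightarrow> length q \<le> length p"
  shows "degree E (last p) = 1"
proof -
  let ?n = "length p"
  have sg: "simple_graph V E"
    using tree by (simp add: is_tree_def)
  have last: "last p = p!(?n - 1)"
    using p(2) by (intro last_conv_nth) auto
  have "Suc (?n - 2) = ?n - 1" "Suc (?n - 2) < ?n"
    using p(2) by auto
  then have "{p!(?n - 2), last p} \<in> E"
    using is_path_edge_nth[OF p(1), of "?n - 2"] last by simp
  moreover have "e = {p!(?n - 2), last p}" if e: "e \<in> E" "last p \<in> e" for e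
  proof -
    obtain y where y: "e = {last p, y}" "y \<noteq> last p" "y \<in> V"
      by (rule simple_graph_edge_other[OF sg e])
    have "y \<in> set p"
    proof (rule longest_path_neighbour_in_path[OF p(1) _ _ y(3) longest])
      show "p \<noteq> []" "{last p, y} \<in> E"
        using p(2) y(1) e(1) by auto
    qed
    then obtain i where i: "i < ?n" "p!i = y"
      by (meson in_set_conv_nth)
    have "i = ?n - 2"
    proof (rule ccontr)
      assume "i \<noteq> ?n - 2"
      moreover have "i \<noteq> ?n - 1"
        using i y(2) last by auto
      ultimately have "is_cycle V E (drop i p)"
        using is_path_drop[OF p(1) i(1)] i y e(1) by (simp add: is_cycle_def hd_drop_conv_nth)
      then show False
        using tree by (simp add: is_tree_def)
    qed
    then show ?thesis
      using y i by (simp add: insert_commute)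
  qed
  ultimately show ?thesis
    unfolding degree_eq_1_iff by blast
qed

lemma tree_ex_leaf_other:
  assumes tree: "is_tree V E" and "v \<in> V" "u \<in> V" "u \<noteq> v"
  shows "\<exists>l\<in>V. l \<noteq> v \<and> degree E l = 1"
proof -
  have "finite V"
    using tree by (simp add: is_tree_def simple_graph_def)
  obtain p0 where p0: "is_path V E p0" "hd p0 = v" "last p0 = u"
    using assms unfolding is_tree_def connected_graph_def by blast
  obtain p where p: "is_path V E p" "hd p = v"
    and longest: "\<And>q. is_path V E q \<Longrightarrow> hd q = v \<Longrightarrow> length q \<le> length p"
    by (rule ex_longest_path_from[OF \<open>finite V\<close> p0(1), unfolded p0(2)]) auto
  have "length p0 \<noteq> 0"
    using p0(1) by (simp add: is_path_def)
  moreover have "length p0 \<noteq> 1"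
    using p0(2,3) assms(4) by (auto simp: length_Suc_conv)
  ultimately have "2 \<le> length p"
    using longest[OF p0(1,2)] by linarith
  moreover have "distinct p" "p \<noteq> []"
    using p(1) by (auto simp: is_path_def)
  ultimately have "last p \<noteq> v"
    using p(2) distinct_hd_eq_last_iff[of p] by simp
  moreover have "last p \<in> V"
    using p by (auto simp: is_path_def)
  moreover have "degree E (last p) = 1"
    using longest_path_last_leaf[OF tree p(1) \<open>2 \<le> length p\<close>] longest p(2) by simp
  ultimately show ?thesis
    by blast
qed

lemma pendant_edges_on_path:
  assumes "is_path V E p"
  shows "set (walk_edges p) \<inter> pendant_edges V E \<subseteq> {{p!0, p!1}, {p!(length p - 2), p!(length p - 1)}}"
proof
  fix e
  assume e: "e \<in> set (walk_edges p) \<inter> pendant_edges V E"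
  then obtain i where i: "e = {p!i, p!Suc i}" "Suc i < length p"
    unfolding set_walk_edges by blast
  obtain x where x: "x \<in> e" "degree E x = 1"
    using e unfolding pendant_edges_def by blast
  consider "x = p!i" | "x = p!Suc i"
    using x(1) i(1) by blast
  then show "e \<in> {{p!0, p!1}, {p!(length p - 2), p!(length p - 1)}}"
  proof cases
    case 1
    then have "i = 0"
      using path_interior_degree[OF assms, of i] i(2) x(2) by blast
    then show ?thesis
      using i by simp
  next
    case 2
    then have "i = length p - 2"
      using path_interior_degree[OF assms, of "Suc i"] i(2) x(2) by fastforce
    then show ?thesis
      using i by (simp add: Suc_diff_Suc numeral_2_eq_2)
  qed
qed

lemma card_le_2_if_subset_doubleton:
  assumes "X \<subseteq> {a, b}"
  shows "card X \<le> 2"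
proof -
  have "card X \<le> card {a, b}"
    using assms by (simp add: card_mono)
  also have "\<dots> \<le> 2"
    by (cases "a = b") simp_all
  finally show ?thesis .
qed

lemma pendant_edges_edge_gp_set:
  assumes "is_tree V E"
  shows "edge_gp_set V E (pendant_edges V E)"
proof -
  have "card (set (walk_edges p) \<inter> pendant_edges V E) \<le> 2" if "is_path V E p" for p
    using card_le_2_if_subset_doubleton[OF pendant_edges_on_path[OF that]] .
  moreover have "pendant_edges V E \<subseteq> E"
    by (auto simp: pendant_edges_def)
  ultimately show ?thesis
    by (simp add: tree_edge_gp_set_iff[OF assms])
qed

section \<open>Removing a leaf\<close>

lemma connected_path_through_edge:
  assumes "connected_graph V E" "x \<in> V" "{a, b} \<in> E" "a \<in> V" "b \<in> V" "a \<noteq> b"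
  shows "\<exists>r. is_path V E r \<and> hd r = x \<and> {a, b} \<in> set (walk_edges r)"
proof -
  obtain q where q: "is_path V E q" "hd q = x" "last q = a"
    using assms(1,2,4) unfolding connected_graph_def by blast
  have "q \<noteq> []"
    using q(1) by (simp add: is_path_def)
  show ?thesis
  proof (cases "b \<in> set q")
    case False
    then have "is_path V E (q @ [b])"
      using is_path_snoc[OF q(1) assms(5)] q(3) assms(3) by simp
    moreover have "hd (q @ [b]) = x" "{a, b} \<in> set (walk_edges (q @ [b]))"
      using q(2,3) \<open>q \<noteq> []\<close> by (simp_all add: walk_edges_append)
    ultimately show ?thesis
      by blast
  next
    case True
    then obtain q1 q2 where q12: "q = q1 @ b # q2"
      by (meson split_list)
    have "a \<in> set (b # q2)"
      using q(3) q12 by (metis last_appendR last_in_set list.distinct(1))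
    then have "a \<notin> set (q1 @ [b])"
      using q(1) q12 assms(6) by (auto simp: is_path_def)
    moreover have "is_path V E (q1 @ [b])"
      using q(1) q12 is_path_appendD1[of V E "q1 @ [b]" q2] by simp
    ultimately have "is_path V E (q1 @ [b, a])"
      using is_path_snoc[of V E "q1 @ [b]" a] assms(3,4) by (simp add: insert_commute)
    moreover have "hd (q1 @ [b, a]) = x"
      using q(2) q12 by (cases q1) auto
    moreover have "{a, b} \<in> set (walk_edges (q1 @ [b, a]))"
      by (simp add: walk_edges_append insert_commute)
    ultimately show ?thesis
      by blast
  qed
qed

lemma path_reorient:
  assumes "is_path V E p" "hd p = x \<or> last p = x"
  obtains p' where "is_path V E p'" "last p' = x" "set (walk_edges p') = set (walk_edges p)"
proof (cases "last p = x")
  case False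
  then have "last (rev p) = x"
    using assms(2) by (simp add: last_rev)
  then show thesis
    using that is_path_rev[OF assms(1)] set_walk_edges_rev by blast
qed (use that assms(1) in blast)

locale tree_leaf =
  fixes V :: "'a set" and E :: "'a set set" and l w :: 'a
  assumes tree: "is_tree V E"
    and leaf_edge: "{l, w} \<in> E"
    and leaf_degree: "degree E l = 1"
begin

lemma simple: "simple_graph V E"
  using tree by (simp add: is_tree_def)

lemma finite_edges: "finite E"
  by (rule simple_graph_finite_edges[OF simple])

lemma leaf_neq_neighbour: "l \<noteq> w" and leaf_in: "l \<in> V" and neighbour_in: "w \<in> V"
proof -
  obtain a b where "{l, w} = {a, b}" "a \<noteq> b" "a \<in> V" "b \<in> V"
    using simple leaf_edge unfolding simple_graph_def by blast
  then show "l \<noteq> w" "l \<in> V" "w \<in> V"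
    by (auto simp: doubleton_eq_iff)
qed

lemma edge_at_leaf: "e \<in> E \<Longrightarrow> l \<in> e \<Longrightarrow> e = {l, w}"
  using degree_1_edge_unique[OF leaf_degree leaf_edge] by simp

lemma is_path_remove_leaf:
  assumes "is_path V E p" "hd p \<noteq> l" "last p \<noteq> l"
  shows "is_path (V - {l}) (E - {{l, w}}) p"
proof -
  have "l \<notin> set p"
    by (rule path_avoids_leaf[OF assms(1) leaf_degree assms(2,3)])
  then have "{l, w} \<notin> set (walk_edges p)"
    using walk_edges_subset by blast
  then show ?thesis
    using assms(1) \<open>l \<notin> set p\<close> by (auto simp: is_path_def)
qed

lemma simple_graph_remove_leaf: "simple_graph (V - {l}) (E - {{l, w}})"
  unfolding simple_graph_def
proof (intro conjI ballI)
  show "finite (V - {l})"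
    using simple by (simp add: simple_graph_def)
  fix e
  assume e: "e \<in> E - {{l, w}}"
  then obtain a b where "e = {a, b}" "a \<noteq> b" "a \<in> V" "b \<in> V"
    using simple unfolding simple_graph_def by blast
  moreover have "l \<notin> e"
    using edge_at_leaf e by blast
  ultimately show "\<exists>a b. e = {a, b} \<and> a \<noteq> b \<and> a \<in> V - {l} \<and> b \<in> V - {l}"
    by blast
qed

lemma connected_graph_remove_leaf: "connected_graph (V - {l}) (E - {{l, w}})"
  unfolding connected_graph_def
proof (intro ballI)
  fix x y
  assume "x \<in> V - {l}" "y \<in> V - {l}"
  moreover obtain p where "is_path V E p" "hd p = x" "last p = y"
    using tree calculation unfolding is_tree_def connected_graph_def by blast
  ultimately show "\<exists>p. is_path (V - {l}) (E - {{l, w}}) p \<and> hd p = x \<and> last p = y"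
    using is_path_remove_leaf by blast
qed

lemma is_tree_remove_leaf: "is_tree (V - {l}) (E - {{l, w}})"
proof -
  have "\<nexists>c. is_cycle (V - {l}) (E - {{l, w}}) c"
    using tree is_path_mono[of "V - {l}" "E - {{l, w}}" _ V E]
    by (auto simp: is_tree_def is_cycle_def)
  then show ?thesis
    using simple_graph_remove_leaf connected_graph_remove_leaf neighbour_in leaf_neq_neighbour
    by (auto simp: is_tree_def)
qed

lemma edge_gp_set_remove_leaf:
  assumes "edge_gp_set V E S" "S' \<subseteq> S - {{l, w}}"
  shows "edge_gp_set (V - {l}) (E - {{l, w}}) S'"
proof -
  have "card (set (walk_edges p) \<inter> S') \<le> 2" if "is_path (V - {l}) (E - {{l, w}}) p" for p
  proof -
    have "is_path V E p"
      using is_path_mono[OF that] by blast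
    then have "card (set (walk_edges p) \<inter> S) \<le> 2"
      using assms(1) tree_edge_gp_set_iff[OF tree] by blast
    moreover have "card (set (walk_edges p) \<inter> S') \<le> card (set (walk_edges p) \<inter> S)"
      using assms(2) by (intro card_mono) auto
    ultimately show ?thesis
      by linarith
  qed
  moreover have "S' \<subseteq> E - {{l, w}}"
    using assms tree_edge_gp_set_iff[OF tree] by blast
  ultimately show ?thesis
    by (simp add: tree_edge_gp_set_iff[OF is_tree_remove_leaf])
qed

lemma degree_neighbour: "degree E w = Suc (degree (E - {{l, w}}) w)"
proof -
  have "{e \<in> E. w \<in> e} = insert {l, w} {e \<in> E - {{l, w}}. w \<in> e}"
    using leaf_edge by auto
  then show ?thesis
    using finite_edges by (simp add: degree_def)
qed

lemma degree_remove_leaf_other: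
  "y \<notin> {l, w} \<Longrightarrow> degree (E - {{l, w}}) y = degree E y"
  unfolding degree_def by (metis (lifting) DiffE DiffI insertI1 singletonD)

lemma leaf_edge_pendant: "{l, w} \<in> pendant_edges V E"
  using leaf_edge leaf_in leaf_degree by (auto simp: pendant_edges_def)

lemma pendant_edges_remove_leaf:
  "pendant_edges (V - {l}) (E - {{l, w}}) \<subseteq>
     (pendant_edges V E - {{l, w}}) \<union> {e \<in> E - {{l, w}}. w \<in> e \<and> degree E w = 2}"
proof
  fix e
  assume "e \<in> pendant_edges (V - {l}) (E - {{l, w}})"
  then obtain y where e: "e \<in> E - {{l, w}}" "y \<in> e" "y \<in> V - {l}"
    and y: "degree (E - {{l, w}}) y = 1"
    unfolding pendant_edges_def by blast
  show "e \<in> (pendant_edges V E - {{l, w}}) \<union> {e \<in> E - {{l, w}}. w \<in> e \<and> degree E w = 2}"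
  proof (cases "y = w")
    case True
    then show ?thesis
      using e y degree_neighbour by simp
  next
    case False
    then have "degree E y = 1"
      using y e(3) degree_remove_leaf_other[of y] by simp
    then show ?thesis
      using e by (auto simp: pendant_edges_def)
  qed
qed

lemma finite_pendant_edges: "finite (pendant_edges V E)"
  using finite_edges by (rule finite_subset[rotated]) (auto simp: pendant_edges_def)

lemma card_pendant_edges_remove_leaf_less:
  assumes "degree E w \<noteq> 2"
  shows "card (pendant_edges (V - {l}) (E - {{l, w}})) < card (pendant_edges V E)"
proof -
  have "card (pendant_edges (V - {l}) (E - {{l, w}})) \<le> card (pendant_edges V E - {{l, w}})"
    using pendant_edges_remove_leaf assms finite_pendant_edges by (intro card_mono) auto
  also have "\<dots> < card (pendant_edges V E)"
    using finite_pendant_edges leaf_edge_pendant by (rule card_Diff1_less)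
  finally show ?thesis .
qed

lemma card_pendant_edges_remove_leaf_le:
  "card (pendant_edges (V - {l}) (E - {{l, w}})) \<le> card (pendant_edges V E)"
proof (cases "degree E w = 2")
  case True
  \<comment> \<open>\<open>w\<close> becomes a leaf, and its remaining edge may be a new pendant edge.\<close>
  have "card (pendant_edges (V - {l}) (E - {{l, w}}))
      \<le> card ((pendant_edges V E - {{l, w}}) \<union> {e \<in> E - {{l, w}}. w \<in> e})"
    using pendant_edges_remove_leaf finite_edges finite_pendant_edges True by (intro card_mono) auto
  also have "\<dots> \<le> card (pendant_edges V E - {{l, w}}) + card {e \<in> E - {{l, w}}. w \<in> e}"
    by (rule card_Un_le)
  also have "\<dots> = card (pendant_edges V E - {{l, w}}) + 1"
    using True degree_neighbour by (simp add: degree_def)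
  also have "\<dots> = card (pendant_edges V E)"
    using card.remove[OF finite_pendant_edges leaf_edge_pendant] by simp
  finally show ?thesis .
qed (use card_pendant_edges_remove_leaf_less in fastforce)

lemma neighbour_edge_unique:
  assumes "degree E w = 2" "g \<in> E - {{l, w}}" "w \<in> g" "e \<in> E - {{l, w}}" "w \<in> e"
  shows "e = g"
  using degree_1_edge_unique[of "E - {{l, w}}" w g e] degree_neighbour assms by simp

lemma two_le_card_pendant_edges:
  assumes "degree E w \<noteq> 1"
  shows "2 \<le> card (pendant_edges V E)"
proof -
  obtain y where y: "y \<in> V" "y \<noteq> l" "degree E y = 1"
    using tree_ex_leaf_other[OF tree leaf_in neighbour_in] leaf_neq_neighbour by metis
  then obtain e where e: "e \<in> E" "y \<in> e"
    unfolding degree_eq_1_iff by blast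
  then have "e \<in> pendant_edges V E"
    using y by (auto simp: pendant_edges_def)
  moreover have "e \<noteq> {l, w}"
    using e y assms by auto
  ultimately have "card {{l, w}, e} \<le> card (pendant_edges V E)"
    using leaf_edge_pendant finite_pendant_edges by (intro card_mono) auto
  then show ?thesis
    using \<open>e \<noteq> {l, w}\<close> by simp
qed

lemma path_through_neighbour_edge_extends:
  assumes neighbour: "degree E w = 2" "w \<in> g"
    and p: "is_path (V - {l}) (E - {{l, w}}) p" "g \<in> set (walk_edges p)"
  obtains p' where "is_path V E p'" "set (walk_edges p') = insert {l, w} (set (walk_edges p))"
proof -
  \<comment> \<open>\<open>w\<close> is a leaf of the smaller tree, so a path using \<open>g\<close> ends at \<open>w\<close>.\<close>
  have "degree (E - {{l, w}}) w = 1"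
    using neighbour(1) degree_neighbour by simp
  moreover have "w \<in> set p"
    using p(2) neighbour(2) walk_edges_subset by blast
  ultimately have "hd p = w \<or> last p = w"
    using path_avoids_leaf[OF p(1)] by blast
  then obtain p' where p': "is_path (V - {l}) (E - {{l, w}}) p'" "last p' = w"
    "set (walk_edges p') = set (walk_edges p)"
    using path_reorient[OF p(1)] by blast
  then have "p' \<noteq> []" "l \<notin> set p'"
    by (auto simp: is_path_def)
  then have "is_path V E (p' @ [l])"
    using is_path_snoc[OF is_path_mono[OF p'(1)] leaf_in] p'(2) leaf_edge
    by (auto simp: insert_commute)
  moreover have "set (walk_edges (p' @ [l])) = insert {l, w} (set (walk_edges p))"
    using p' \<open>p' \<noteq> []\<close> by (auto simp: walk_edges_append insert_commute)
  ultimately show thesis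
    using that by blast
qed

lemma edge_gp_set_exchange:
  assumes neighbour: "degree E w = 2" "g \<in> E - {{l, w}}" "w \<in> g"
    and S: "edge_gp_set V E S" "{l, w} \<in> S" "g \<notin> S"
  shows "edge_gp_set (V - {l}) (E - {{l, w}}) (insert g (S - {{l, w}}))"
proof -
  have S_bound: "card (set (walk_edges p) \<inter> S) \<le> 2" if "is_path V E p" for p
    using S(1) that tree_edge_gp_set_iff[OF tree] by blast
  have "card (set (walk_edges p) \<inter> insert g (S - {{l, w}})) \<le> 2"
    if p: "is_path (V - {l}) (E - {{l, w}}) p" for p
  proof (cases "g \<in> set (walk_edges p)")
    case False
    then have "card (set (walk_edges p) \<inter> insert g (S - {{l, w}})) \<le> card (set (walk_edges p) \<inter> S)"
      by (intro card_mono) auto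
    then show ?thesis
      using S_bound is_path_mono[OF p] by (meson Diff_subset order_trans)
  next
    case True
    let ?W = "set (walk_edges p)"
    obtain p' where "is_path V E p'" "set (walk_edges p') = insert {l, w} ?W"
      using path_through_neighbour_edge_extends[OF neighbour(1,3) p True] .
    then have "card (insert {l, w} ?W \<inter> S) \<le> 2"
      using S_bound by metis
    moreover have "{l, w} \<notin> ?W"
      using p by (auto simp: is_path_def)
    then have "card (insert {l, w} ?W \<inter> S) = Suc (card (?W \<inter> S))"
      and "?W \<inter> insert g (S - {{l, w}}) = insert g (?W \<inter> S)"
      using S(2) True by auto
    ultimately show ?thesis
      using S(3) by simp
  qed
  moreover have "insert g (S - {{l, w}}) \<subseteq> E - {{l, w}}"
    using S(1) neighbour(2) by (auto simp: edge_gp_set_def)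
  ultimately show ?thesis
    by (simp add: tree_edge_gp_set_iff[OF is_tree_remove_leaf])
qed

lemma path_from_leaf_neighbour_edges:
  assumes neighbour: "degree E w = 2" "g \<in> E - {{l, w}}" "w \<in> g"
    and r: "is_path V E r" "hd r = l" "h \<in> set (walk_edges r)" "h \<noteq> {l, w}"
  shows "{l, w} \<in> set (walk_edges r)" "g \<in> set (walk_edges r)"
proof -
  obtain x rest where x: "r = l # x # rest"
    using r(2,3) by (cases r rule: walk_edges.cases) auto
  have "{l, x} \<in> E"
    using is_path_edge_nth[OF r(1), of 0] x by simp
  then have "x = w"
    using edge_at_leaf[of "{l, x}"] leaf_neq_neighbour by (auto simp: doubleton_eq_iff)
  obtain y rest' where y: "rest = y # rest'"
    using r(3,4) x \<open>x = w\<close> by (cases rest) auto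
  have "{w, y} \<in> E" "y \<noteq> l"
    using r(1) x y \<open>x = w\<close> by (auto simp: is_path_def)
  then have "{w, y} = g"
    using neighbour_edge_unique[OF neighbour, of "{w, y}"] leaf_neq_neighbour
    by (auto simp: doubleton_eq_iff)
  then show "{l, w} \<in> set (walk_edges r)" "g \<in> set (walk_edges r)"
    using x y \<open>x = w\<close> by auto
qed

lemma edge_gp_set_subset_pair:
  assumes neighbour: "degree E w = 2" "g \<in> E - {{l, w}}" "w \<in> g"
    and S: "edge_gp_set V E S" "{l, w} \<in> S" "g \<in> S"
  shows "S \<subseteq> {{l, w}, g}"
proof
  fix h
  assume "h \<in> S"
  show "h \<in> {{l, w}, g}"
  proof (rule ccontr)
    assume h: "h \<notin> {{l, w}, g}"
    obtain a b where "h = {a, b}" "a \<noteq> b" "a \<in> V" "b \<in> V"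
      using simple S(1) \<open>h \<in> S\<close> unfolding simple_graph_def edge_gp_set_def by blast
    then obtain r where r: "is_path V E r" "hd r = l" "h \<in> set (walk_edges r)"
      using connected_path_through_edge[of V E l a b] tree leaf_in S(1) \<open>h \<in> S\<close>
      by (auto simp: is_tree_def edge_gp_set_def)
    then have "{{l, w}, g, h} \<subseteq> set (walk_edges r) \<inter> S"
      using path_from_leaf_neighbour_edges[OF neighbour r] h S(2,3) \<open>h \<in> S\<close> by auto
    then have "card {{l, w}, g, h} \<le> 2"
      using S(1) r(1) tree_edge_gp_set_iff[OF tree] card_mono[of "set (walk_edges r) \<inter> S"]
      by (meson List.finite_set finite_Int order_trans)
    moreover have "{l, w} \<noteq> g"
      using neighbour(2) by blast
    ultimately show False
      using h by (auto simp: card_insert_if split: if_splits)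
  qed
qed

lemma card_edge_gp_set_le_if_neighbour_degree_2:
  assumes IH: "\<And>S'. edge_gp_set (V - {l}) (E - {{l, w}}) S' \<Longrightarrow>
      card S' \<le> card (pendant_edges (V - {l}) (E - {{l, w}}))"
    and S: "edge_gp_set V E S" "{l, w} \<in> S" and neighbour: "degree E w = 2"
  shows "card S \<le> card (pendant_edges V E)"
proof -
  obtain g where g: "g \<in> E - {{l, w}}" "w \<in> g"
    using neighbour degree_neighbour degree_eq_1_iff[of "E - {{l, w}}" w] by auto
  show ?thesis
  proof (cases "g \<in> S")
    case False
    have "finite S"
      using S(1) finite_edges by (auto simp: edge_gp_set_def intro: finite_subset)
    then have "card S = card (insert g (S - {{l, w}}))"
      using card.remove[OF _ S(2)] False by simp
    also have "\<dots> \<le> card (pendant_edges (V - {l}) (E - {{l, w}}))"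
      using IH edge_gp_set_exchange[OF neighbour g S False] .
    also have "\<dots> \<le> card (pendant_edges V E)"
      by (rule card_pendant_edges_remove_leaf_le)
    finally show ?thesis .
  next
    case True
    have "card S \<le> 2"
      using card_le_2_if_subset_doubleton edge_gp_set_subset_pair[OF neighbour g S True] .
    also have "\<dots> \<le> card (pendant_edges V E)"
      using two_le_card_pendant_edges neighbour by simp
    finally show ?thesis .
  qed
qed

lemma card_edge_gp_set_le_by_remove_leaf:
  assumes IH: "\<And>S'. edge_gp_set (V - {l}) (E - {{l, w}}) S' \<Longrightarrow>
      card S' \<le> card (pendant_edges (V - {l}) (E - {{l, w}}))"
    and S: "edge_gp_set V E S"
  shows "card S \<le> card (pendant_edges V E)"
proof (cases "{l, w} \<in> S")
  case False
  then have "card S \<le> card (pendant_edges (V - {l}) (E - {{l, w}}))"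
    using IH edge_gp_set_remove_leaf[OF S, of S] by blast
  then show ?thesis
    using card_pendant_edges_remove_leaf_le by linarith
next
  case True
  show ?thesis
  proof (cases "degree E w = 2")
    case False
    have "finite S"
      using S finite_edges by (auto simp: edge_gp_set_def intro: finite_subset)
    then have "card S = Suc (card (S - {{l, w}}))"
      using card.remove[OF _ True] by simp
    also have "\<dots> \<le> Suc (card (pendant_edges (V - {l}) (E - {{l, w}})))"
      using IH edge_gp_set_remove_leaf[OF S, of "S - {{l, w}}"] by simp
    also have "\<dots> \<le> card (pendant_edges V E)"
      using card_pendant_edges_remove_leaf_less[OF False] by simp
    finally show ?thesis .
  qed (rule card_edge_gp_set_le_if_neighbour_degree_2[OF IH S True])
qed

end

lemma edge_gp_set_card_le_pendant_edges:
  assumes "is_tree V E" "edge_gp_set V E S"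
  shows "card S \<le> card (pendant_edges V E)"
  using assms
proof (induction "card V" arbitrary: V E S rule: less_induct)
  case less
  have simple: "simple_graph V E"
    using less.prems(1) by (simp add: is_tree_def)
  show ?case
  proof (cases "E = {}")
    case True
    then show ?thesis
      using less.prems(2) by (simp add: edge_gp_set_def)
  next
    case False
    then obtain a b where "a \<in> V" "b \<in> V" "a \<noteq> b"
      using simple unfolding simple_graph_def by blast
    then obtain l where "l \<in> V" "degree E l = 1"
      using tree_ex_leaf_other[OF less.prems(1)] by blast
    moreover obtain f where "f \<in> E" "l \<in> f"
      using \<open>degree E l = 1\<close> unfolding degree_eq_1_iff by blast
    moreover obtain w where "f = {l, w}"
      using simple_graph_edge_other[OF simple \<open>f \<in> E\<close> \<open>l \<in> f\<close>] by blast
    ultimately interpret tree_leaf V E l w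
      using less.prems(1) by unfold_locales simp_all
    have "card (V - {l}) < card V"
      using simple leaf_in by (intro card_Diff1_less) (simp_all add: simple_graph_def)
    then show ?thesis
      using card_edge_gp_set_le_by_remove_leaf less.hyps is_tree_remove_leaf less.prems(2)
      by blast
  qed
qed

theorem theorem3p3:
  fixes V :: "'a set" and E :: "'a set set"
  assumes "is_tree V E"
  shows "gp_e V E = card (pendant_edges V E)"
proof -
  have "finite E"
    using assms by (auto simp: is_tree_def intro: simple_graph_finite_edges)
  moreover have "{card S | S. edge_gp_set V E S} \<subseteq> card ` Pow E"
    by (auto simp: edge_gp_set_def)
  ultimately have "finite {card S | S. edge_gp_set V E S}"
    by (simp add: finite_subset)
  then show ?thesis
    unfolding gp_e_def
    using pendant_edges_edge_gp_set[OF assms] edge_gp_set_card_le_pendant_edges[OF assms]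
    by (intro Max_eqI) auto
qed

end
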